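(* Let $f:\mathbb R\to B_2$ have a left limit at every point of $\mathbb R\cup\{\infty\}$ and be left continuous at every point of $\mathbb R$, and extend $f$ to $\mathbb R\cup\{\infty\}$ by $f(\infty)=f(\infty-0)$. Let $\mu:\mathrm{Sym}^-\to B_2$ be the function given by $\mu\big([[a_1,b_1))\Delta\cdots\Delta[[a_n,b_n))\big)=f(a_1)\oplus f(b_1)\oplus\cdots\oplus f(a_n)\oplus f(b_n)$ for $a_1,\dots,a_n,b_1,\dots,b_n\in\mathbb R\cup\{\infty\}$. Then $\mu$ is a measure.
   Context: $B_2=\{0,1\}$, $\oplus$ addition modulo 2, $\Delta$ symmetric difference. For $t\in\mathbb R\cup\{\infty\}$, $f$ has a left limit at $t$ if there is $t'<t$ (real) such that $f$ is constant on $(t',t)$; this constant is $f(t-0)$. $f$ is left continuous at $t\in\mathbb R$ if $f(t)=f(t-0)$. For $a,b\in\mathbb R\cup\{\infty\}$ the symmetric interval is $[[a,b))=[a,b)$ if $a<b$, $=[b,a)$ if $b<a$, $=\emptyset$ if $a=b$ (subsets of $\mathbb R$). $\mathrm{Sym}^-$ is the family of subsets of $\mathbb R$ generated by these intervals under $\Delta$ and $\cap$; its elements are finite symmetric differences of such intervals. A function $\mu:\mathrm{Sym}^-\to B_2$ is a measure if for every sequence of pairwise disjoint sets of $\mathrm{Sym}^-$ whose union lies in $\mathrm{Sym}^-$, only finitely many have $\mu$-value 1 and $\mu$ of the union is their number modulo 2. *)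

theory Defs
  imports "HOL-Library.Extended_Real"
begin

text \<open>Conventions: B_2 is rendered as bool (1 = True, 0 = False), addition modulo 2
  is (\<noteq>) (exclusive or). The extended line R \<union> {\<infinity>} is rendered as the ereals
  different from -\<infinity>.\<close>

definition symdiff :: "'a set \<Rightarrow> 'a set \<Rightarrow> 'a set" where
  "symdiff A B = (A - B) \<union> (B - A)"

definition sym_ivl :: "ereal \<Rightarrow> ereal \<Rightarrow> real set" where
  "sym_ivl a b = (if a < b then {x. a \<le> ereal x \<and> ereal x < b}
                  else if b < a then {x. b \<le> ereal x \<and> ereal x < a}
                  else {})"

inductive_set SymMinus :: "real set set" where
  ivl: "a \<noteq> -\<infinity> \<Longrightarrow> b \<noteq> -\<infinity> \<Longrightarrow> sym_ivl a b \<in> SymMinus"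
| sdiff: "A \<in> SymMinus \<Longrightarrow> B \<in> SymMinus \<Longrightarrow> symdiff A B \<in> SymMinus"
| inter: "A \<in> SymMinus \<Longrightarrow> B \<in> SymMinus \<Longrightarrow> A \<inter> B \<in> SymMinus"

definition has_left_limit :: "(real \<Rightarrow> bool) \<Rightarrow> real \<Rightarrow> bool" where
  "has_left_limit f t \<longleftrightarrow> (\<exists>t' < t. \<exists>c. \<forall>x. t' < x \<and> x < t \<longrightarrow> f x = c)"

definition left_lim :: "(real \<Rightarrow> bool) \<Rightarrow> real \<Rightarrow> bool" where
  "left_lim f t = (THE c. \<exists>t' < t. \<forall>x. t' < x \<and> x < t \<longrightarrow> f x = c)"

definition has_left_limit_inf :: "(real \<Rightarrow> bool) \<Rightarrow> bool" where
  "has_left_limit_inf f \<longleftrightarrow> (\<exists>t'. \<exists>c. \<forall>x. t' < x \<longrightarrow> f x = c)"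

definition left_lim_inf :: "(real \<Rightarrow> bool) \<Rightarrow> bool" where
  "left_lim_inf f = (THE c. \<exists>t'. \<forall>x. t' < x \<longrightarrow> f x = c)"

definition left_continuous_at :: "(real \<Rightarrow> bool) \<Rightarrow> real \<Rightarrow> bool" where
  "left_continuous_at f t \<longleftrightarrow> f t = left_lim f t"

text \<open>Extension of f to R \<union> {\<infinity>} with f(\<infinity>) = f(\<infinity>-0) (value at -\<infinity> is irrelevant).\<close>
definition f_ext :: "(real \<Rightarrow> bool) \<Rightarrow> ereal \<Rightarrow> bool" where
  "f_ext f a = (case a of ereal x \<Rightarrow> f x | PInfty \<Rightarrow> left_lim_inf f | MInfty \<Rightarrow> False)"

definition is_B2_measure :: "'a set set \<Rightarrow> ('a set \<Rightarrow> bool) \<Rightarrow> bool" where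
  "is_B2_measure S \<mu> \<longleftrightarrow>
     (\<forall>A :: nat \<Rightarrow> 'a set. (\<forall>i. A i \<in> S) \<and> (\<forall>i j. i \<noteq> j \<longrightarrow> A i \<inter> A j = {})
        \<and> (\<Union>i. A i) \<in> S \<longrightarrow>
        finite {i. \<mu> (A i)} \<and> \<mu> (\<Union>i. A i) = odd (card {i. \<mu> (A i)}))"

end

theory Submission
  imports Defs
begin

text \<open>
  Let A i be disjoint sets of SymMinus whose union U lies in SymMinus, and let a be a lower
  bound of U. Call an interval I good if the slices A i \<inter> I and U \<inter> I satisfy the measure
  identity. Since \<mu> adds (mod 2) under symmetric difference of sets of SymMinus, [a, z) and
  [z, x) good imply [a, x) good. Just left of any point s the extended f is constant, so every
  slice of a short [z, s) has measure 0 and [z, s) is good; just right of a real point r every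
  set of SymMinus is either disjoint from a short [r, x) or contains it, so at most one A i
  meets [r, x) and it is good. Real induction on the extended line shows that [a, \<infinity>) is good,
  which is the claim.
\<close>

definition ivl_symdiff :: "(ereal \<times> ereal) list \<Rightarrow> real set" where
  "ivl_symdiff ps = foldr (\<lambda>(a, b) S. symdiff (sym_ivl a b) S) ps {}"

definition endpoint_parity :: "(real \<Rightarrow> bool) \<Rightarrow> (ereal \<times> ereal) list \<Rightarrow> bool" where
  "endpoint_parity f ps = foldr (\<lambda>(a, b) acc. (acc \<noteq> (f_ext f a \<noteq> f_ext f b))) ps False"

definition valid_ivls :: "(ereal \<times> ereal) list \<Rightarrow> bool" where
  "valid_ivls ps \<longleftrightarrow> (\<forall>(a, b) \<in> set ps. a \<noteq> -\<infinity> \<and> b \<noteq> -\<infinity>)"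

definition sym_span :: "real set set" where
  "sym_span = {ivl_symdiff ps | ps. valid_ivls ps}"

lemma mem_symdiff [simp]: "x \<in> symdiff A B \<longleftrightarrow> (x \<in> A) \<noteq> (x \<in> B)"
  by (auto simp: symdiff_def)

lemma ivl_symdiff_simps [simp]:
  "ivl_symdiff [] = {}"
  "ivl_symdiff ((a, b) # ps) = symdiff (sym_ivl a b) (ivl_symdiff ps)"
  by (simp_all add: ivl_symdiff_def)

lemma endpoint_parity_simps [simp]:
  "endpoint_parity f [] = False"
  "endpoint_parity f ((a, b) # ps) = (endpoint_parity f ps \<noteq> (f_ext f a \<noteq> f_ext f b))"
  by (simp_all add: endpoint_parity_def)

lemma valid_ivls_simps [simp]:
  "valid_ivls []"
  "valid_ivls ((a, b) # ps) \<longleftrightarrow> a \<noteq> -\<infinity> \<and> b \<noteq> -\<infinity> \<and> valid_ivls ps"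
  "valid_ivls (ps @ qs) \<longleftrightarrow> valid_ivls ps \<and> valid_ivls qs"
  by (auto simp: valid_ivls_def)

lemma ivl_symdiff_append: "ivl_symdiff (ps @ qs) = symdiff (ivl_symdiff ps) (ivl_symdiff qs)"
proof (induction ps)
  case (Cons p ps)
  then show ?case
    by (cases p) (simp add: set_eq_iff; blast)
qed (simp add: symdiff_def)

lemma endpoint_parity_append:
  "endpoint_parity f (ps @ qs) = (endpoint_parity f ps \<noteq> endpoint_parity f qs)"
proof (induction ps)
  case (Cons p ps)
  then show ?case
    by (cases p) (simp; blast)
qed simp

lemma endpoint_parity_eq_False:
  "(\<And>a b. (a, b) \<in> set ps \<Longrightarrow> f_ext f a = f_ext f b) \<Longrightarrow> \<not> endpoint_parity f ps"
proof (induction ps)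
  case (Cons p ps)
  then show ?case
    by (cases p) simp
qed simp

lemma sym_ivl_eq: "sym_ivl a b = {x. min a b \<le> ereal x \<and> ereal x < max a b}"
  by (auto simp: sym_ivl_def min_def max_def)

lemma sym_ivl_same [simp]: "sym_ivl a a = {}"
  by (simp add: sym_ivl_def)

lemma sym_ivl_split: "a \<le> b \<Longrightarrow> b \<le> c \<Longrightarrow> sym_ivl a c = symdiff (sym_ivl a b) (sym_ivl b c)"
  by (auto simp: sym_ivl_eq min_def max_def not_le)

definition ivl_clip :: "ereal \<Rightarrow> ereal \<Rightarrow> ereal \<times> ereal \<Rightarrow> ereal \<times> ereal" where
  "ivl_clip u v = (\<lambda>(a, b). let lo = max (min a b) (min u v)
                            in (lo, max lo (min (max a b) (max u v))))"

lemma sym_ivl_Int_sym_ivl: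
  "sym_ivl a b \<inter> sym_ivl u v = case_prod sym_ivl (ivl_clip u v (a, b))"
proof -
  define lo where "lo = max (min a b) (min u v)"
  define hi where "hi = min (max a b) (max u v)"
  have "ivl_clip u v (a, b) = (lo, max lo hi)"
    by (simp add: ivl_clip_def Let_def lo_def hi_def)
  moreover have "sym_ivl lo (max lo hi) = {x. lo \<le> ereal x \<and> ereal x < hi}"
    by (auto simp: sym_ivl_eq less_max_iff_disj)
  ultimately show ?thesis
    by (auto simp: sym_ivl_eq lo_def hi_def)
qed

lemma ivl_clip_bounds:
  assumes "ivl_clip u v (a, b) = (c, d)"
  shows "c = d \<or> min u v \<le> c \<and> c \<le> d \<and> d \<le> max u v"
proof -
  define lo where "lo = max (min a b) (min u v)"
  define hi where "hi = min (max a b) (max u v)"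
  have "c = lo" "d = max lo hi"
    using assms by (auto simp: ivl_clip_def Let_def lo_def hi_def)
  moreover have "min u v \<le> lo" "hi \<le> max u v"
    by (simp_all add: lo_def hi_def)
  ultimately show ?thesis
    by (cases "lo \<le> hi") (auto simp: max_def)
qed

lemma ivl_clip_valid:
  assumes "a \<noteq> -\<infinity>" "b \<noteq> -\<infinity>" "ivl_clip u v (a, b) = (c, d)"
  shows "c \<noteq> -\<infinity> \<and> d \<noteq> -\<infinity>"
proof -
  have "min a b \<noteq> -\<infinity>"
    using assms(1,2) by (simp add: min_def)
  moreover have "min a b \<le> c" "c \<le> d"
    using assms(3) by (auto simp: ivl_clip_def Let_def)
  ultimately show ?thesis
    by auto
qed

lemma ivl_symdiff_Int_sym_ivl:
  "ivl_symdiff ps \<inter> sym_ivl u v = ivl_symdiff (map (ivl_clip u v) ps)"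
proof (induction ps)
  case (Cons p ps)
  obtain a b where p: "p = (a, b)"
    by fastforce
  have "ivl_symdiff (p # ps) \<inter> sym_ivl u v
          = symdiff (sym_ivl a b \<inter> sym_ivl u v) (ivl_symdiff ps \<inter> sym_ivl u v)"
    by (auto simp: p)
  then show ?case
    by (simp add: Cons.IH sym_ivl_Int_sym_ivl p split: prod.split)
qed simp

lemma valid_ivls_map_clip: "valid_ivls ps \<Longrightarrow> valid_ivls (map (ivl_clip u v) ps)"
  by (auto simp: valid_ivls_def dest: ivl_clip_valid)

lemma sym_spanE:
  assumes "S \<in> sym_span"
  obtains ps where "valid_ivls ps" "S = ivl_symdiff ps"
  using assms by (auto simp: sym_span_def)

lemma sym_span_empty: "{} \<in> sym_span"
  unfolding sym_span_def by (intro CollectI exI[of _ "[]"]) simp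

lemma sym_span_sym_ivl: "a \<noteq> -\<infinity> \<Longrightarrow> b \<noteq> -\<infinity> \<Longrightarrow> sym_ivl a b \<in> sym_span"
  unfolding sym_span_def by (intro CollectI exI[of _ "[(a, b)]"]) (auto simp: set_eq_iff)

lemma sym_span_symdiff: "S \<in> sym_span \<Longrightarrow> T \<in> sym_span \<Longrightarrow> symdiff S T \<in> sym_span"
  by (elim sym_spanE, unfold sym_span_def)
     (metis (mono_tags) CollectI ivl_symdiff_append valid_ivls_simps(3))

lemma sym_span_Int_sym_ivl: "S \<in> sym_span \<Longrightarrow> S \<inter> sym_ivl u v \<in> sym_span"
  by (elim sym_spanE, unfold sym_span_def) (auto simp: ivl_symdiff_Int_sym_ivl valid_ivls_map_clip)

lemma sym_span_Int:
  assumes "S \<in> sym_span" and "T \<in> sym_span"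
  shows "S \<inter> T \<in> sym_span"
proof -
  obtain qs where "valid_ivls qs" "T = ivl_symdiff qs"
    using assms(2) by (rule sym_spanE)
  moreover have "valid_ivls qs \<Longrightarrow> S \<inter> ivl_symdiff qs \<in> sym_span"
  proof (induction qs)
    case (Cons q qs)
    obtain a b where "q = (a, b)"
      by fastforce
    moreover have "S \<inter> symdiff (sym_ivl a b) T' = symdiff (S \<inter> sym_ivl a b) (S \<inter> T')" for T'
      by auto
    ultimately show ?case
      using Cons assms(1) by (simp add: sym_span_symdiff sym_span_Int_sym_ivl)
  qed (simp add: sym_span_empty)
  ultimately show ?thesis
    by simp
qed

lemma SymMinus_subset_sym_span: "SymMinus \<subseteq> sym_span"
proof
  show "S \<in> sym_span" if "S \<in> SymMinus" for S
    using that by induction (auto simp: sym_span_sym_ivl sym_span_symdiff sym_span_Int)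
qed

lemma bdd_below_sym_ivl:
  assumes "a \<noteq> -\<infinity>" "b \<noteq> -\<infinity>"
  shows "bdd_below (sym_ivl a b)"
proof (cases "min a b")
  case (real r)
  then show ?thesis
    by (intro bdd_belowI[of _ r]) (auto simp: sym_ivl_eq)
next
  case PInf
  then show ?thesis
    by (simp add: sym_ivl_eq)
next
  case MInf
  with assms show ?thesis
    by (simp add: min_def split: if_splits)
qed

lemma SymMinus_bdd_below: "S \<in> SymMinus \<Longrightarrow> bdd_below S"
proof (induction rule: SymMinus.induct)
  case (sdiff A B)
  have "symdiff A B \<subseteq> A \<union> B"
    by auto
  with sdiff.IH show ?case
    by (meson bdd_below_Un bdd_below_mono)
qed (auto simp: bdd_below_sym_ivl bdd_below_mono)

lemma eventually_at_right_ereal_less: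
  "ereal r < c \<Longrightarrow> \<forall>\<^sub>F x in at_right r. ereal x < c"
  by (rule order_tendstoD(2)) (simp_all add: tendsto_ident_at)

lemma SymMinus_right_germ:
  assumes "S \<in> SymMinus"
  shows "\<forall>\<^sub>F x in at_right r. \<forall>y \<in> sym_ivl (ereal r) (ereal x). y \<in> S \<longleftrightarrow> r \<in> S"
  using assms
proof induction
  case (ivl a b)
  have "\<forall>\<^sub>F x in at_right r. ereal r < c \<longrightarrow> ereal x < c" for c
    by (cases "ereal r < c") (simp_all add: eventually_at_right_ereal_less)
  with eventually_at_right_less[of r]
  have "\<forall>\<^sub>F x in at_right r. r < x \<and> (ereal r < min a b \<longrightarrow> ereal x < min a b)
          \<and> (ereal r < max a b \<longrightarrow> ereal x < max a b)"
    by (intro eventually_conj)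
  then show ?case
  proof eventually_elim
    case (elim x)
    show ?case
    proof
      fix y assume "y \<in> sym_ivl (ereal r) (ereal x)"
      with elim have y: "ereal r \<le> ereal y" "ereal y < ereal x"
        by (simp_all add: sym_ivl_def)
      consider "ereal r < min a b" | "r \<in> sym_ivl a b" | "max a b \<le> ereal r"
        by (metis mem_Collect_eq not_le sym_ivl_eq)
      then show "y \<in> sym_ivl a b \<longleftrightarrow> r \<in> sym_ivl a b"
      proof cases
        case 1
        with elim y have "ereal y < min a b"
          by (meson less_trans)
        with 1 show ?thesis
          by (simp add: sym_ivl_eq not_le[symmetric])
      next
        case 2
        then have "min a b \<le> ereal r" "ereal x < max a b"
          using elim by (simp_all add: sym_ivl_eq)
        with y have "min a b \<le> ereal y" "ereal y < max a b"
          by (meson order_trans less_trans)+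
        with 2 show ?thesis
          by (simp add: sym_ivl_eq)
      next
        case 3
        with y have "max a b \<le> ereal y"
          by (meson order_trans)
        with 3 show ?thesis
          by (simp add: sym_ivl_eq not_less[symmetric])
      qed
    qed
  qed
next
  case (sdiff A B)
  from sdiff.IH show ?case
    by eventually_elim simp
next
  case (inter A B)
  from inter.IH show ?case
    by eventually_elim simp
qed

lemma odd_card_xor:
  assumes "finite {i. p i}" and "finite {i. q i}"
  shows "finite {i. p i \<noteq> q i}
    \<and> odd (card {i. p i \<noteq> q i}) = (odd (card {i. p i}) \<noteq> odd (card {i. q i}))"
proof -
  let ?P = "{i. p i}" and ?Q = "{i. q i}" and ?D = "{i. p i \<noteq> q i}"
  have "?D \<subseteq> ?P \<union> ?Q"
    by auto
  then have fin: "finite ?D"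
    using assms by (simp add: finite_subset)
  have "?P \<union> ?Q = ?D \<union> (?P \<inter> ?Q)" and "?D \<inter> (?P \<inter> ?Q) = {}"
    by auto
  then have "card (?P \<union> ?Q) = card ?D + card (?P \<inter> ?Q)"
    using assms fin by (simp add: card_Un_disjoint)
  moreover have "card ?P + card ?Q = card (?P \<union> ?Q) + card (?P \<inter> ?Q)"
    using assms by (rule card_Un_Int)
  ultimately have "card ?P + card ?Q = card ?D + 2 * card (?P \<inter> ?Q)"
    by simp
  then have "odd (card ?D) = odd (card ?P + card ?Q)"
    by simp
  with fin show ?thesis
    by simp
qed

definition parity_additive :: "('a set \<Rightarrow> bool) \<Rightarrow> (nat \<Rightarrow> 'a set) \<Rightarrow> 'a set \<Rightarrow> bool" where
  "parity_additive \<mu> A U \<longleftrightarrow> finite {i. \<mu> (A i)} \<and> \<mu> U = odd (card {i. \<mu> (A i)})"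

lemma parity_additive_null: "(\<And>i. \<not> \<mu> (A i)) \<Longrightarrow> \<not> \<mu> U \<Longrightarrow> parity_additive \<mu> A U"
  by (simp add: parity_additive_def)

lemma parity_additive_single:
  assumes "\<not> \<mu> {}"
  shows "parity_additive \<mu> (\<lambda>i. if i = k then S else {}) S"
proof -
  have "{i. \<mu> (if i = k then S else {})} = (if \<mu> S then {k} else {})"
    using assms by auto
  then show ?thesis
    by (simp add: parity_additive_def)
qed

lemma left_lim_eqI:
  assumes "t' < t" and "\<And>x. t' < x \<Longrightarrow> x < t \<Longrightarrow> f x = c"
  shows "left_lim f t = c"
  unfolding left_lim_def
proof (rule the_equality)
  show "\<exists>t'<t. \<forall>x. t' < x \<and> x < t \<longrightarrow> f x = c"
    using assms by blast
next
  fix c' assume "\<exists>t''<t. \<forall>x. t'' < x \<and> x < t \<longrightarrow> f x = c'"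
  then obtain t'' where "t'' < t" "\<And>x. t'' < x \<Longrightarrow> x < t \<Longrightarrow> f x = c'"
    by blast
  moreover have "max t' t'' < (max t' t'' + t) / 2" "(max t' t'' + t) / 2 < t"
    using assms(1) \<open>t'' < t\<close> by simp_all
  ultimately show "c' = c"
    using assms(2) by (metis max.strict_boundedE)
qed

lemma left_lim_inf_eqI:
  assumes "\<And>x. t' < x \<Longrightarrow> f x = c"
  shows "left_lim_inf f = c"
  unfolding left_lim_inf_def
proof (rule the_equality)
  show "\<exists>t'. \<forall>x. t' < x \<longrightarrow> f x = c"
    using assms by blast
next
  fix c' assume "\<exists>t''. \<forall>x. t'' < x \<longrightarrow> f x = c'"
  then obtain t'' where "\<And>x. t'' < x \<Longrightarrow> f x = c'"
    by blast
  then show "c' = c"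
    using assms[of "max t' t'' + 1"] by simp
qed

lemma f_ext_left_constant:
  assumes "\<forall>t. has_left_limit f t" and "has_left_limit_inf f" and "\<forall>t. left_continuous_at f t"
    and "s \<noteq> -\<infinity>"
  shows "\<exists>s'<s. \<forall>e. s' < e \<and> e \<le> s \<longrightarrow> f_ext f e = f_ext f s"
proof (cases s)
  case (real t)
  obtain t' c where t': "t' < t" "\<And>x. t' < x \<Longrightarrow> x < t \<Longrightarrow> f x = c"
    using assms(1) unfolding has_left_limit_def by meson
  then have "left_lim f t = c"
    by (rule left_lim_eqI)
  then have "f t = c"
    using assms(3) by (simp add: left_continuous_at_def)
  have "f_ext f e = f_ext f s" if e: "ereal t' < e" "e \<le> s" for e
  proof -
    obtain x where x: "e = ereal x" "t' < x" "x \<le> t"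
      using e real by (cases e) auto
    then have "f x = f t"
      using t'(2) \<open>f t = c\<close> by (cases "x = t") auto
    with x(1) real show ?thesis
      by (simp add: f_ext_def)
  qed
  moreover have "ereal t' < s"
    using t'(1) real by simp
  ultimately show ?thesis
    by blast
next
  case PInf
  obtain t' c where t': "\<And>x. t' < x \<Longrightarrow> f x = c"
    using assms(2) unfolding has_left_limit_inf_def by meson
  have "f_ext f e = f_ext f \<infinity>" if "ereal t' < e" for e
    using that t' left_lim_inf_eqI[OF t'] by (cases e) (simp_all add: f_ext_def)
  moreover have "ereal t' < \<infinity>"
    by simp
  ultimately show ?thesis
    using PInf by blast
qed (use assms(4) in simp)

lemma real_induction_ereal:
  fixes P :: "ereal \<Rightarrow> bool"
  assumes start: "P (ereal a)"
    and left: "\<And>s. ereal a < s \<Longrightarrow> (\<And>y. ereal a \<le> y \<Longrightarrow> y < s \<Longrightarrow> P y) \<Longrightarrow> P s"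
    and right: "\<And>r. a \<le> r \<Longrightarrow> P (ereal r) \<Longrightarrow> \<forall>\<^sub>F x in at_right r. P (ereal x)"
  shows "P \<infinity>"
proof -
  define G where "G = {x. \<forall>y. ereal a \<le> y \<and> y \<le> x \<longrightarrow> P y}"
  define s where "s = Sup G"
  have "ereal a \<in> G"
    using start by (auto simp: G_def dest: antisym)
  then have a_le_s: "ereal a \<le> s"
    by (simp add: s_def Sup_upper)
  have below: "P y" if "ereal a \<le> y" "y < s" for y
  proof -
    obtain g where "g \<in> G" "y < g"
      using \<open>y < s\<close> by (auto simp: s_def less_Sup_iff)
    with that show ?thesis
      by (auto simp: G_def)
  qed
  have "P s"
    using start left below a_le_s by (cases "s = ereal a") auto
  with below have s_in_G: "s \<in> G"
    by (auto simp: G_def order.order_iff_strict)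
  have "s = \<infinity>"
  proof (rule ccontr)
    assume "s \<noteq> \<infinity>"
    with a_le_s obtain r where r: "s = ereal r"
      by (cases s) auto
    have "\<forall>\<^sub>F x in at_right r. P (ereal x)"
      using right a_le_s \<open>P s\<close> r by simp
    then obtain b where "r < b" and b: "\<And>x. r < x \<Longrightarrow> x < b \<Longrightarrow> P (ereal x)"
      by (auto simp: eventually_at_right_field)
    define d where "d = (r + b) / 2"
    have "ereal d \<in> G"
    proof -
      have "P y" if "ereal a \<le> y" "y \<le> ereal d" for y
      proof (cases "y \<le> s")
        case True
        with s_in_G that show ?thesis
          by (auto simp: G_def)
      next
        case False
        with that r \<open>r < b\<close> obtain x where "y = ereal x" "r < x" "x < b"
          by (cases y) (auto simp: d_def)
        with b show ?thesis
          by simp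
      qed
      then show ?thesis
        by (simp add: G_def)
    qed
    then have "ereal d \<le> s"
      by (simp add: s_def Sup_upper)
    with r \<open>r < b\<close> show False
      by (simp add: d_def)
  qed
  with \<open>P s\<close> show ?thesis
    by simp
qed

locale endpoint_measure =
  fixes f :: "real \<Rightarrow> bool" and \<mu> :: "real set \<Rightarrow> bool"
  assumes mu_ivl_symdiff: "valid_ivls ps \<Longrightarrow> \<mu> (ivl_symdiff ps) = endpoint_parity f ps"
begin

lemma mu_empty: "\<not> \<mu> {}"
  using mu_ivl_symdiff[of "[]"] by simp

lemma mu_symdiff:
  assumes "S \<in> sym_span" and "T \<in> sym_span"
  shows "\<mu> (symdiff S T) = (\<mu> S \<noteq> \<mu> T)"
proof -
  obtain ps qs where "valid_ivls ps" "S = ivl_symdiff ps" "valid_ivls qs" "T = ivl_symdiff qs"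
    using assms by (elim sym_spanE)
  then show ?thesis
    using mu_ivl_symdiff[of "ps @ qs"] mu_ivl_symdiff[of ps] mu_ivl_symdiff[of qs]
    by (simp add: ivl_symdiff_append endpoint_parity_append)
qed

lemma not_mu_if_f_ext_constant:
  assumes "S \<in> sym_span" and "S \<subseteq> sym_ivl u v"
    and const: "\<And>e. min u v \<le> e \<Longrightarrow> e \<le> max u v \<Longrightarrow> f_ext f e = c"
  shows "\<not> \<mu> S"
proof -
  obtain ps where ps: "valid_ivls ps" "S = ivl_symdiff ps"
    using assms(1) by (rule sym_spanE)
  have "S = ivl_symdiff (map (ivl_clip u v) ps)"
    using assms(2) ps(2) ivl_symdiff_Int_sym_ivl by blast
  moreover have "\<not> endpoint_parity f (map (ivl_clip u v) ps)"
  proof (rule endpoint_parity_eq_False)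
    fix c' d assume "(c', d) \<in> set (map (ivl_clip u v) ps)"
    then obtain a b where "ivl_clip u v (a, b) = (c', d)"
      by auto
    then have "c' = d \<or> min u v \<le> c' \<and> c' \<le> d \<and> d \<le> max u v"
      by (rule ivl_clip_bounds)
    then show "f_ext f c' = f_ext f d"
    proof
      assume "min u v \<le> c' \<and> c' \<le> d \<and> d \<le> max u v"
      then have "f_ext f c' = c" "f_ext f d = c"
        using const order.trans[of c' d "max u v"] order.trans[of "min u v" c' d] by auto
      then show ?thesis
        by simp
    qed simp
  qed
  ultimately show ?thesis
    using mu_ivl_symdiff valid_ivls_map_clip ps(1) by simp
qed

lemma parity_additive_symdiff:
  assumes "\<And>i. A i \<in> sym_span" "\<And>i. B i \<in> sym_span" "U \<in> sym_span" "V \<in> sym_span"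
    and "parity_additive \<mu> A U" "parity_additive \<mu> B V"
  shows "parity_additive \<mu> (\<lambda>i. symdiff (A i) (B i)) (symdiff U V)"
  using assms odd_card_xor[of "\<lambda>i. \<mu> (A i)" "\<lambda>i. \<mu> (B i)"]
  by (simp add: parity_additive_def mu_symdiff)

lemma parity_additive_if_f_ext_constant:
  assumes "\<And>i. A i \<in> SymMinus" and "U \<in> SymMinus" and "u \<le> v"
    and const: "\<And>e. u \<le> e \<Longrightarrow> e \<le> v \<Longrightarrow> f_ext f e = c"
  shows "parity_additive \<mu> (\<lambda>i. A i \<inter> sym_ivl u v) (U \<inter> sym_ivl u v)"
proof (rule parity_additive_null)
  have "min u v = u" "max u v = v"
    using \<open>u \<le> v\<close> by (simp_all add: min_absorb1 max_absorb2)
  then have const': "\<And>e. min u v \<le> e \<Longrightarrow> e \<le> max u v \<Longrightarrow> f_ext f e = c"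
    using const by simp
  have span: "S \<inter> sym_ivl u v \<in> sym_span" if "S \<in> SymMinus" for S
    using that SymMinus_subset_sym_span sym_span_Int_sym_ivl by blast
  show "\<not> \<mu> (A i \<inter> sym_ivl u v)" for i
    using span[OF assms(1)] by (rule not_mu_if_f_ext_constant[OF _ Int_lower2 const'])
  show "\<not> \<mu> (U \<inter> sym_ivl u v)"
    using span[OF assms(2)] by (rule not_mu_if_f_ext_constant[OF _ Int_lower2 const'])
qed

lemma parity_additive_sym_ivl_split:
  assumes "\<And>i. A i \<in> SymMinus" and "U \<in> SymMinus"
    and "parity_additive \<mu> (\<lambda>i. A i \<inter> sym_ivl a b) (U \<inter> sym_ivl a b)"
    and "parity_additive \<mu> (\<lambda>i. A i \<inter> sym_ivl b c) (U \<inter> sym_ivl b c)"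
    and "a \<le> b" and "b \<le> c"
  shows "parity_additive \<mu> (\<lambda>i. A i \<inter> sym_ivl a c) (U \<inter> sym_ivl a c)"
proof -
  have span: "S \<inter> sym_ivl u v \<in> sym_span" if "S \<in> SymMinus" for S u v
    using that SymMinus_subset_sym_span sym_span_Int_sym_ivl by blast
  have "S \<inter> sym_ivl a c = symdiff (S \<inter> sym_ivl a b) (S \<inter> sym_ivl b c)" for S
    using sym_ivl_split[OF \<open>a \<le> b\<close> \<open>b \<le> c\<close>] by auto
  with assms span show ?thesis
    by (simp add: parity_additive_symdiff)
qed

lemma parity_additive_at_right:
  assumes A: "\<And>i. A i \<in> SymMinus" and disj: "\<And>i j. i \<noteq> j \<Longrightarrow> A i \<inter> A j = {}"
    and U: "(\<Union>i. A i) \<in> SymMinus"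
  shows "\<forall>\<^sub>F x in at_right r. parity_additive \<mu> (\<lambda>i. A i \<inter> sym_ivl (ereal r) (ereal x))
                                  ((\<Union>i. A i) \<inter> sym_ivl (ereal r) (ereal x))"
proof (cases "r \<in> (\<Union>i. A i)")
  case False
  from SymMinus_right_germ[OF U, of r] show ?thesis
  proof eventually_elim
    case (elim x)
    with False have "A i \<inter> sym_ivl (ereal r) (ereal x) = {}"
      and "(\<Union>i. A i) \<inter> sym_ivl (ereal r) (ereal x) = {}" for i
      by blast+
    then show ?case
      by (simp add: parity_additive_def mu_empty)
  qed
next
  case True
  then obtain k where k: "r \<in> A k"
    by blast
  from SymMinus_right_germ[OF A[of k], of r] show ?thesis
  proof eventually_elim
    case (elim x)
    let ?I = "sym_ivl (ereal r) (ereal x)"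
    have "A k \<inter> ?I = ?I"
      using elim k by blast
    then have "A i \<inter> ?I = (if i = k then ?I else {})" and "(\<Union>i. A i) \<inter> ?I = ?I" for i
      using disj by auto
    then show ?case
      using parity_additive_single[of \<mu> k ?I] mu_empty by simp
  qed
qed

lemma parity_additive_left_slice:
  assumes f_left: "\<And>s. s \<noteq> -\<infinity> \<Longrightarrow> \<exists>s'<s. \<forall>e. s' < e \<and> e \<le> s \<longrightarrow> f_ext f e = f_ext f s"
    and A: "\<And>i. A i \<in> SymMinus" and U: "U \<in> SymMinus" and "b < s"
  shows "\<exists>z. b < ereal z \<and> ereal z < s
           \<and> parity_additive \<mu> (\<lambda>i. A i \<inter> sym_ivl (ereal z) s) (U \<inter> sym_ivl (ereal z) s)"
proof -
  from \<open>b < s\<close> have "s \<noteq> -\<infinity>"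
    by auto
  then obtain s' where s': "s' < s" "\<And>e. s' < e \<Longrightarrow> e \<le> s \<Longrightarrow> f_ext f e = f_ext f s"
    using f_left by meson
  obtain z where z: "max s' b < ereal z" "ereal z < s"
    using ereal_dense2[of "max s' b" s] s'(1) \<open>b < s\<close> by auto
  have "parity_additive \<mu> (\<lambda>i. A i \<inter> sym_ivl (ereal z) s) (U \<inter> sym_ivl (ereal z) s)"
    using A U
  proof (rule parity_additive_if_f_ext_constant)
    show "ereal z \<le> s"
      using z(2) by simp
    show "f_ext f e = f_ext f s" if "ereal z \<le> e" "e \<le> s" for e
    proof (rule s'(2))
      show "s' < e"
        using less_le_trans[of s' "ereal z" e] z(1) that(1) by simp
    qed (fact that(2))
  qed
  with z show ?thesis
    by auto
qed

lemma parity_additive_SymMinus: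
  assumes f_left: "\<And>s. s \<noteq> -\<infinity> \<Longrightarrow> \<exists>s'<s. \<forall>e. s' < e \<and> e \<le> s \<longrightarrow> f_ext f e = f_ext f s"
    and A: "\<And>i. A i \<in> SymMinus" and disj: "\<And>i j. i \<noteq> j \<Longrightarrow> A i \<inter> A j = {}"
    and U: "(\<Union>i. A i) \<in> SymMinus"
  shows "parity_additive \<mu> A (\<Union>i. A i)"
proof -
  define good where "good I \<longleftrightarrow> parity_additive \<mu> (\<lambda>i. A i \<inter> I) ((\<Union>i. A i) \<inter> I)" for I
  have split: "good (sym_ivl a c)"
    if "good (sym_ivl a b)" "good (sym_ivl b c)" "a \<le> b" "b \<le> c" for a b c
    using that unfolding good_def by (rule parity_additive_sym_ivl_split[where A = A, OF A U])
  obtain a where a: "\<And>y. y \<in> (\<Union>i. A i) \<Longrightarrow> a \<le> y"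
    using SymMinus_bdd_below[OF U] by (auto simp: bdd_below_def)
  have "good (sym_ivl (ereal a) \<infinity>)"
  proof (induction rule: real_induction_ereal[of "\<lambda>x. good (sym_ivl (ereal a) x)" a])
    case 1
    show ?case
      by (simp add: good_def parity_additive_null mu_empty)
  next
    case (2 s)
    obtain z where z: "ereal a < ereal z" "ereal z < s" "good (sym_ivl (ereal z) s)"
      using parity_additive_left_slice[where A = A, OF f_left A U \<open>ereal a < s\<close>]
      unfolding good_def by blast
    moreover have "good (sym_ivl (ereal a) (ereal z))"
      using 2 z by simp
    ultimately show ?case
      using split[of "ereal a" "ereal z" s] by simp
  next
    case (3 r)
    have "\<forall>\<^sub>F x in at_right r. good (sym_ivl (ereal r) (ereal x))"
      unfolding good_def using A disj U by (rule parity_additive_at_right)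
    with eventually_at_right_less[of r] show ?case
    proof eventually_elim
      case (elim x)
      then show ?case
        using split[OF "3"(2), of "ereal x"] "3"(1) by simp
    qed
  qed
  moreover have "(\<Union>i. A i) \<inter> sym_ivl (ereal a) \<infinity> = (\<Union>i. A i)"
    using a by (auto simp: sym_ivl_def)
  moreover from this have "A i \<inter> sym_ivl (ereal a) \<infinity> = A i" for i
    by blast
  ultimately show ?thesis
    by (simp add: good_def)
qed

end

theorem theorem6p4:
  fixes f :: "real \<Rightarrow> bool" and \<mu> :: "real set \<Rightarrow> bool"
  assumes "\<forall>t. has_left_limit f t"
    and "has_left_limit_inf f"
    and "\<forall>t. left_continuous_at f t"
    and "\<forall>ps :: (ereal \<times> ereal) list.
           (\<forall>(a, b) \<in> set ps. a \<noteq> -\<infinity> \<and> b \<noteq> -\<infinity>) \<longrightarrow>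
           \<mu> (foldr (\<lambda>(a, b) S. symdiff (sym_ivl a b) S) ps {})
             = foldr (\<lambda>(a, b) acc. (acc \<noteq> (f_ext f a \<noteq> f_ext f b))) ps False"
  shows "is_B2_measure SymMinus \<mu>"
proof -
  interpret endpoint_measure f \<mu>
    using assms(4) by unfold_locales (simp add: valid_ivls_def ivl_symdiff_def endpoint_parity_def)
  have f_left: "\<exists>s'<s. \<forall>e. s' < e \<and> e \<le> s \<longrightarrow> f_ext f e = f_ext f s" if "s \<noteq> -\<infinity>" for s
    using f_ext_left_constant[OF assms(1-3) that] .
  show ?thesis
    unfolding is_B2_measure_def
    using parity_additive_SymMinus[OF f_left] by (auto simp: parity_additive_def)
qed

end
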